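(* Let $r$ be a positive integer. Then $$\sum_{k = 1}^\infty \frac{( - 1)^{(r-1)k}\left(\frac{27}{5}\right)^k}{k \binom{3k}kF_{3r}^{2k}} = 2\sqrt {15}\, \frac{F_r }{L_{3r} }\arctan \bigg( \frac{\sqrt 3 }{\alpha ^r (\alpha ^r + L_r )} \bigg) - ( - 1)^{r} \frac{L_r }{L_{3r} }\log \bigg( \frac{F_{3r} }{5F_r^3 } \bigg),$$ $$\sum_{k = 1}^\infty \frac{( - 1)^{rk} 27^k }{k\binom{3k}kL_{3r}^{2k} } = \frac{2\sqrt {15}}{5}\, \frac{L_r }{F_{3r}}\arctan \bigg( \frac{\sqrt 3 }{\alpha ^r (\alpha ^r + \sqrt 5F_r )} \bigg)+ ( - 1)^r \frac{F_r }{F_{3r} }\log \bigg( \frac{L_{3r} }{L_r^3 } \bigg).$$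
   Context: $F_n$ and $L_n$ are the Fibonacci and Lucas numbers: $F_0=0$, $F_1=1$, $L_0=2$, $L_1=1$, and $X_n=X_{n-1}+X_{n-2}$ for both sequences. $\alpha=(1+\sqrt5)/2$ is the golden ratio. *)

theory Defs
  imports Complex_Main "HOL-Number_Theory.Fib"
begin

fun lucas :: "nat \<Rightarrow> nat" where
  "lucas 0 = 2"
| "lucas (Suc 0) = 1"
| "lucas (Suc (Suc n)) = lucas (Suc n) + lucas n"

definition golden :: real where
  "golden = (1 + sqrt 5) / 2"

end

theory Submission
  imports Defs "HOL-Analysis.Analysis"
begin

text \<open>
  By the Beta integral, 1 / (k * binomial (3k) k) = 2 * integral over [0,1] of t^k (1-t)^(2k-1),
  so for |x| < 27/4 the series sum_k x^k / (k * binomial (3k) k) is the integral over [0,1]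
  of the rational function 2 x t (1-t) / (1 - x t (1-t)^2).  Writing x = 1 / (a (1-a)^2),
  the denominator factors through (t - a) (t^2 + (a-2) t + (1-a)^2), and partial fractions
  give an antiderivative made of two logarithms and one arctangent.  The two identities are
  the cases 3a = -(-1)^r 5 F_r^2 and 3a = (-1)^r L_r^2: the Binet relations
  L_r^2 - 5 F_r^2 = 4 (-1)^r, F_3r = F_r (5 F_r^2 + 3 (-1)^r), L_3r = L_r (L_r^2 - 3 (-1)^r)
  simplify the logarithms, and since alpha^r = (L_r + sqrt 5 F_r) / 2, the triple-angle
  formula for arctan turns the arctangent into the one of the statement.
\<close>

lemma beta_integral_nat:
  "((\<lambda>t::real. t^m * (1-t)^n) has_integral fact m * fact n / fact (m+n+1)) {0..1}"
proof -
  have "((\<lambda>t. t powr (real m + 1 - 1) * (1-t) powr (real n + 1 - 1)) has_integral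
          Beta (real m + 1) (real n + 1)) {0..1}"
    by (rule has_integral_Beta_real) auto
  moreover have "Beta (real m + 1) (real n + 1) = fact m * fact n / fact (m+n+1)"
  proof -
    have "Gamma (real k + 1) = fact k" for k
      using Gamma_fact[of k] by (simp add: add.commute)
    moreover have "real m + 1 + (real n + 1) = real (m+n+1) + 1" by simp
    ultimately show ?thesis by (simp only: Beta_def)
  qed
  ultimately have "((\<lambda>t. t powr real m * (1-t) powr real n) has_integral
          fact m * fact n / fact (m+n+1)) {0..1}" by simp
  then show ?thesis
    by (rule has_integral_spike_finite[where S="{0,1}", rotated 2]) (auto simp: powr_realpow)
qed

lemma inverse_binomial_integral:
  "((\<lambda>t::real. t^(k+1) * (1-t)^(2*k+1)) has_integral
      1 / (2 * real (k+1) * real ((3*(k+1)) choose (k+1)))) {0..1}"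
proof -
  have "k+1 \<le> 3*(k+1)" "3*(k+1) - (k+1) = 2*k+2" "(k+1) + (2*k+1) + 1 = 3*(k+1)" by simp_all
  note binom = binomial_fact[OF this(1), where 'a=real, unfolded this(2)]
  have fact_even: "(fact (2*k+2) :: real) = 2 * real (k+1) * fact (2*k+1)"
    using fact_Suc[of "2*k+1", where 'a=real] by (simp add: algebra_simps)
  have "fact (k+1) * fact (2*k+1) / fact ((k+1) + (2*k+1) + 1)
          = (1 / (2 * real (k+1) * real ((3*(k+1)) choose (k+1))) :: real)"
    unfolding binom fact_even \<open>(k+1) + (2*k+1) + 1 = 3*(k+1)\<close> by simp
  then show ?thesis
    using beta_integral_nat[of "k+1" "2*k+1"] by simp
qed

lemma mult_one_minus_square_le:
  fixes t :: real
  assumes "t \<le> 4/3"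
  shows "t * (1-t)^2 \<le> 4/27"
proof -
  have "4 - 27 * (t * (1-t)^2) = (3*t-1)^2 * (4-3*t)" by algebra
  moreover have "(3*t-1)^2 * (4-3*t) \<ge> 0" using assms by simp
  ultimately show ?thesis by linarith
qed

lemma Weierstrass_m_test_sums_integral:
  fixes f :: "nat \<Rightarrow> 'a::ordered_euclidean_space \<Rightarrow> 'b::banach"
  assumes cont: "\<And>k. continuous_on {a..b} (f k)"
    and bound: "\<And>k t. t \<in> {a..b} \<Longrightarrow> norm (f k t) \<le> M k" and "summable M"
    and integral: "\<And>k. (f k has_integral c k) {a..b}"
  shows "c sums integral {a..b} (\<lambda>t. \<Sum>k. f k t)"
proof -
  have "uniform_limit {a..b} (\<lambda>n t. \<Sum>k<n. f k t) (\<lambda>t. \<Sum>k. f k t) sequentially"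
    using bound \<open>summable M\<close> by (rule Weierstrass_m_test)
  moreover have "continuous_on {a..b} (\<lambda>t. \<Sum>k<n. f k t)" for n
    using cont by (intro continuous_on_sum) auto
  ultimately obtain I J where I: "\<And>n. ((\<lambda>t. \<Sum>k<n. f k t) has_integral I n) {a..b}"
    and J: "((\<lambda>t. \<Sum>k. f k t) has_integral J) {a..b}" and "I \<longlonglongrightarrow> J"
    by (rule uniform_limit_integral) auto
  have "((\<lambda>t. \<Sum>k<n. f k t) has_integral (\<Sum>k<n. c k)) {a..b}" for n
    using integral by (intro has_integral_sum) auto
  then have "I = (\<lambda>n. \<Sum>k<n. c k)"
    using I has_integral_unique by blast
  with \<open>I \<longlonglongrightarrow> J\<close> J show ?thesis
    by (simp add: sums_def integral_unique)
qed

lemma sums_inverse_binomial_integral: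
  fixes x :: real
  assumes "4 * \<bar>x\<bar> < 27"
  shows "(\<lambda>k. x^(k+1) / (real (k+1) * real ((3*(k+1)) choose (k+1))))
           sums integral {0..1} (\<lambda>t. 2*x*t*(1-t) / (1 - x*t*(1-t)^2))"
proof -
  define f where "f k t = 2*x*t*(1-t) * (x*t*(1-t)^2)^k" for k :: nat and t :: real
  define q where "q = 4 * \<bar>x\<bar> / 27"
  have q: "0 \<le> q" "q < 1" using assms by (auto simp: q_def)
  have ratio_le: "\<bar>x*t*(1-t)^2\<bar> \<le> q" if "t \<in> {0..1}" for t
  proof -
    have "\<bar>x*t*(1-t)^2\<bar> = \<bar>x\<bar> * (t*(1-t)^2)" using that by (simp add: abs_mult)
    also have "\<dots> \<le> \<bar>x\<bar> * (4/27)"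
      using that by (intro mult_left_mono mult_one_minus_square_le) auto
    finally show ?thesis by (simp add: q_def)
  qed
  have bound: "norm (f k t) \<le> 2 * \<bar>x\<bar> * q^k" if "t \<in> {0..1}" for k t
  proof -
    have "\<bar>t*(1-t)\<bar> \<le> 1" using that by (auto simp: abs_mult intro!: mult_le_one)
    then have "\<bar>t*(1-t)\<bar> * \<bar>x*t*(1-t)^2\<bar>^k \<le> 1 * q^k"
      using ratio_le[OF that] by (intro mult_mono power_mono) auto
    then have "2 * \<bar>x\<bar> * (\<bar>t*(1-t)\<bar> * \<bar>x*t*(1-t)^2\<bar>^k) \<le> 2 * \<bar>x\<bar> * q^k"
      by (intro mult_left_mono) auto
    then show ?thesis
      by (simp add: f_def abs_mult power_abs mult.assoc)
  qed
  have term_integral: "(f k has_integral x^(k+1) / (real (k+1) * real ((3*(k+1)) choose (k+1)))) {0..1}"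
    for k
  proof -
    have "f k = (\<lambda>t. 2 * x^(k+1) * (t^(k+1) * (1-t)^(2*k+1)))"
      by (auto simp: f_def power_mult_distrib power_mult power_add)
    moreover have "2 * x^(k+1) * (1 / (2 * real (k+1) * real ((3*(k+1)) choose (k+1))))
        = x^(k+1) / (real (k+1) * real ((3*(k+1)) choose (k+1)))"
      by (simp only: divide_inverse mult_ac inverse_mult_distrib) simp
    ultimately show ?thesis
      using has_integral_mult_right[OF inverse_binomial_integral, of "2 * x^(k+1)" k] by simp
  qed
  have "(\<lambda>k. x^(k+1) / (real (k+1) * real ((3*(k+1)) choose (k+1))))
      sums integral {0..1} (\<lambda>t. \<Sum>k. f k t)"
    using bound q term_integral unfolding f_def
    by (intro Weierstrass_m_test_sums_integral continuous_intros summable_mult summable_geometric) auto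
  also have "integral {0..1} (\<lambda>t. \<Sum>k. f k t) = integral {0..1} (\<lambda>t. 2*x*t*(1-t) / (1 - x*t*(1-t)^2))"
  proof (rule integral_cong)
    fix t :: real
    assume "t \<in> {0..1}"
    then have "\<bar>x*t*(1-t)^2\<bar> < 1" using ratio_le q by fastforce
    then show "(\<Sum>k. f k t) = 2*x*t*(1-t) / (1 - x*t*(1-t)^2)"
      unfolding f_def by (subst suminf_mult) (auto simp: suminf_geometric summable_geometric)
  qed
  finally show ?thesis .
qed

lemma has_real_derivative_arctan_linear_fraction:
  fixes b c w t :: real
  assumes "b + c*t \<noteq> 0"
  shows "((\<lambda>t. arctan (t*w / (b + c*t))) has_real_derivative w*b / ((b + c*t)^2 + (t*w)^2)) (at t)"
proof -
  define D where "D = b + c*t"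
  have "((\<lambda>t. t*w / (b + c*t)) has_real_derivative (w*D - t*w*c) / (D*D)) (at t)"
    using assms unfolding D_def by (auto intro!: derivative_eq_intros)
  moreover have "w*D - t*w*c = w*b"
    unfolding D_def by (simp add: algebra_simps)
  ultimately have "((\<lambda>t. arctan (t*w / (b + c*t))) has_real_derivative
      inverse (1 + (t*w/D)^2) * (w*b / (D*D))) (at t)"
    unfolding D_def by (intro DERIV_chain2[OF DERIV_arctan]) simp
  moreover have "D^2 + (t*w)^2 > 0"
    using assms unfolding D_def[symmetric] by (simp add: add_pos_nonneg)
  then have "inverse (1 + (t*w/D)^2) * (w*b / (D*D)) = w*b / (D^2 + (t*w)^2)"
    using assms unfolding D_def[symmetric] by (simp add: field_simps power2_eq_square)
  ultimately show ?thesis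
    unfolding D_def by simp
qed

lemma has_real_derivative_ln_square:
  fixes a t :: real
  assumes "t \<noteq> a"
  shows "((\<lambda>t. ln ((t-a)^2)) has_real_derivative 2/(t-a)) (at t)"
proof -
  have "((\<lambda>t. ln ((t-a)^2)) has_real_derivative 2*(t-a)/(t-a)^2) (at t)"
    using assms by (auto intro!: derivative_eq_intros)
  moreover have "2*z/z^2 = 2/z" if "z \<noteq> 0" for z :: real
    using that by (simp add: power2_eq_square)
  then have "2*(t-a)/(t-a)^2 = 2/(t-a)"
    using assms by (metis right_minus_eq)
  ultimately show ?thesis by simp
qed

definition inverse_binomial_primitive :: "real \<Rightarrow> real \<Rightarrow> real \<Rightarrow> real" where
  "inverse_binomial_primitive a w t =
     (a * ln ((t-a)^2) + (2*a-1) * ln (t^2 + (a-2)*t + (1-a)^2)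
      + 2*a/w * arctan (t*w / (2*(a-1)^2 + (a-2)*t))) / (3*a-1)"

lemma inverse_binomial_primitive_has_derivative:
  fixes a w t :: real
  assumes ta: "t \<noteq> a" and D: "2*(a-1)^2 + (a-2)*t \<noteq> 0"
    and w: "w \<noteq> 0" and w2: "w^2 = a*(3*a-4)"
  shows "(inverse_binomial_primitive a w has_real_derivative
           2*t*(t-1) / ((t-a) * (t^2 + (a-2)*t + (1-a)^2))) (at t)"
proof -
  define Q where "Q = t^2 + (a-2)*t + (1-a)^2"
  have "4*Q = (2*t+a-2)^2 + w^2"
    unfolding Q_def w2 by algebra
  then have "4*Q > 0" using w by (simp add: add_nonneg_pos)
  then have "Q > 0" by simp
  have "a*(3*a-4) \<ge> 0" using w2 by (metis zero_le_power2)
  then have "a \<noteq> 1" "3*a \<noteq> 1" by auto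
  have "((\<lambda>t. ln ((t-a)^2)) has_real_derivative 2/(t-a)) (at t)"
    using ta by (rule has_real_derivative_ln_square)
  moreover have "((\<lambda>t. ln (t^2 + (a-2)*t + (1-a)^2)) has_real_derivative (2*t+a-2)/Q) (at t)"
    using \<open>Q > 0\<close> unfolding Q_def by (auto intro!: derivative_eq_intros)
  moreover have "((\<lambda>t. arctan (t*w / (2*(a-1)^2 + (a-2)*t))) has_real_derivative w/(2*Q)) (at t)"
  proof -
    have "(2*(a-1)^2 + (a-2)*t)^2 + (t*w)^2 = 4*(a-1)^2*Q"
      unfolding Q_def power_mult_distrib w2 by algebra
    moreover have "w*(2*c) / (4*c*Q) = w/(2*Q)" if "c \<noteq> 0" for c
      using that \<open>Q > 0\<close> by simp
    ultimately show ?thesis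
      using has_real_derivative_arctan_linear_fraction[OF D, of w] \<open>a \<noteq> 1\<close> by simp
  qed
  ultimately have "(inverse_binomial_primitive a w has_real_derivative
      (a*(2/(t-a)) + (2*a-1)*((2*t+a-2)/Q) + 2*a/w*(w/(2*Q))) / (3*a-1)) (at t)"
    unfolding inverse_binomial_primitive_def[abs_def]
    by (intro DERIV_cdivide DERIV_add DERIV_cmult) simp_all
  moreover have "(a*(2/(t-a)) + (2*a-1)*((2*t+a-2)/Q) + 2*a/w*(w/(2*Q))) / (3*a-1)
      = 2*t*(t-1) / ((t-a)*Q)"
  proof -
    have "2*a*Q + ((2*a-1)*(2*t+a-2) + a)*(t-a) = (3*a-1) * (2*t*(t-1))"
      unfolding Q_def by algebra
    moreover have "a*(2/(t-a)) + (2*a-1)*((2*t+a-2)/Q) + 2*a/w*(w/(2*Q))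
        = (2*a*Q + ((2*a-1)*(2*t+a-2) + a)*(t-a)) / ((t-a)*Q)"
      using ta w \<open>Q > 0\<close> by (simp add: field_simps)
    ultimately show ?thesis
      using \<open>3*a \<noteq> 1\<close> by simp
  qed
  ultimately show ?thesis unfolding Q_def by simp
qed

lemma inverse_binomial_primitive_diff:
  fixes a w :: real
  assumes "a*(2*a-3) > 0"
  shows "inverse_binomial_primitive a w 1 - inverse_binomial_primitive a w 0
           = (ln ((a-1)/a) + 2*a/w * arctan (w / (a*(2*a-3)))) / (3*a-1)"
proof -
  define \<rho> where "\<rho> = (a-1)/a"
  have a_outside: "a < 0 \<or> a > 3/2"
    using assms by (auto simp: zero_less_mult_iff)
  then have "\<rho> > 0" "a^2 > 0"
    unfolding \<rho>_def by (auto simp: zero_less_divide_iff)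
  moreover have "(1-a)^2 = \<rho>^2 * a^2" "1^2 + (a-2)*1 + (1-a)^2 = \<rho> * a^2"
    using a_outside unfolding \<rho>_def by (auto simp: field_simps power2_eq_square)
  ultimately have ln_1: "ln ((1-a)^2) = 2 * ln \<rho> + ln (a^2)"
    and ln_2: "ln (1^2 + (a-2)*1 + (1-a)^2) = ln \<rho> + ln (a^2)"
    by (simp_all add: ln_mult ln_realpow)
  have arctan_arg: "1*w / (2*(a-1)^2 + (a-2)*1) = w / (a*(2*a-3))"
    by (simp add: algebra_simps power2_eq_square)
  have "inverse_binomial_primitive a w 1 = (a * (2 * ln \<rho> + ln (a^2)) + (2*a-1) * (ln \<rho> + ln (a^2))
      + 2*a/w * arctan (w / (a*(2*a-3)))) / (3*a-1)"
    unfolding inverse_binomial_primitive_def ln_1 ln_2 arctan_arg by simp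
  moreover have "inverse_binomial_primitive a w 0
      = (a * ln (a^2) + (2*a-1) * (2 * ln \<rho> + ln (a^2)) + 2*a/w * 0) / (3*a-1)"
    unfolding inverse_binomial_primitive_def ln_1[symmetric] by simp
  moreover have "(a * (2 * ln \<rho> + ln (a^2)) + (2*a-1) * (ln \<rho> + ln (a^2))
        + 2*a/w * arctan (w / (a*(2*a-3))))
      - (a * ln (a^2) + (2*a-1) * (2 * ln \<rho> + ln (a^2)) + 2*a/w * 0)
      = ln \<rho> + 2*a/w * arctan (w / (a*(2*a-3)))"
    by (simp add: algebra_simps)
  ultimately show ?thesis
    unfolding \<rho>_def by (simp add: diff_divide_distrib[symmetric])
qed

lemma partial_fraction_integral:
  fixes a w :: real
  assumes a: "a*(2*a-3) > 0" and w: "w > 0" and w2: "w^2 = a*(3*a-4)"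
  shows "((\<lambda>t. 2*t*(t-1) / ((t-a) * (t^2 + (a-2)*t + (1-a)^2))) has_integral
           (ln ((a-1)/a) + 2*a/w * arctan (w / (a*(2*a-3)))) / (3*a-1)) {0..1}"
proof -
  have a_outside: "a < 0 \<or> a > 3/2"
    using a by (auto simp: zero_less_mult_iff)
  have D_pos: "2*(a-1)^2 + (a-2)*t > 0" if "t \<in> {0..1}" for t
  proof -
    have "2*(a-1)^2 + (a-2)*t = (1-t)*(2*(a-1)^2) + t*(a*(2*a-3))" by algebra
    moreover have "(1-t)*(2*(a-1)^2) \<ge> 0" "t*(a*(2*a-3)) \<ge> 0" using that a by auto
    moreover have "(1-t)*(2*(a-1)^2) > 0 \<or> t*(a*(2*a-3)) > 0"
    proof (cases "t = 1")
      case False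
      then have "1 - t > 0" using that by simp
      moreover have "(a-1)^2 > 0" using a_outside by auto
      ultimately show ?thesis by simp
    qed (use a in simp)
    ultimately show ?thesis by linarith
  qed
  have deriv: "(inverse_binomial_primitive a w has_real_derivative
      2*t*(t-1) / ((t-a) * (t^2 + (a-2)*t + (1-a)^2))) (at t)" if "t \<in> {0..1}" for t
    using that a_outside D_pos[OF that] w w2 by (intro inverse_binomial_primitive_has_derivative) auto
  have "((\<lambda>t. 2*t*(t-1) / ((t-a) * (t^2 + (a-2)*t + (1-a)^2))) has_integral
      inverse_binomial_primitive a w 1 - inverse_binomial_primitive a w 0) {0..1}"
    by (intro fundamental_theorem_of_calculus)
       (auto simp: has_real_derivative_iff_has_vector_derivative[symmetric]
             intro!: has_field_derivative_at_within deriv)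
  then show ?thesis
    unfolding inverse_binomial_primitive_diff[OF a] .
qed

lemma sums_inverse_binomial_closed_form:
  fixes a w :: real
  assumes a: "a*(2*a-3) > 0" and w: "w > 0" "w^2 = a*(3*a-4)"
    and conv: "4 < 27 * \<bar>a*(1-a)^2\<bar>"
  shows "(\<lambda>k. (1 / (a*(1-a)^2))^(k+1) / (real (k+1) * real ((3*(k+1)) choose (k+1))))
           sums ((ln ((a-1)/a) + 2*a/w * arctan (w / (a*(2*a-3)))) / (3*a-1))"
proof -
  define x where "x = 1 / (a*(1-a)^2)"
  have "a*(1-a)^2 \<noteq> 0" using conv by auto
  then have "x \<noteq> 0" "x * (a*(1-a)^2) = 1" unfolding x_def by simp_all
  have "4 * \<bar>x\<bar> < 27"
    using conv unfolding x_def by (simp add: abs_mult field_simps)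
  then have "(\<lambda>k. x^(k+1) / (real (k+1) * real ((3*(k+1)) choose (k+1))))
           sums integral {0..1} (\<lambda>t. 2*x*t*(1-t) / (1 - x*t*(1-t)^2))"
    by (rule sums_inverse_binomial_integral)
  also have "integral {0..1} (\<lambda>t. 2*x*t*(1-t) / (1 - x*t*(1-t)^2))
      = integral {0..1} (\<lambda>t. 2*t*(t-1) / ((t-a) * (t^2 + (a-2)*t + (1-a)^2)))"
  proof (rule integral_cong)
    fix t :: real
    define R where "R = (t-a) * (t^2 + (a-2)*t + (1-a)^2)"
    have "1 - x*t*(1-t)^2 = x * (a*(1-a)^2 - t*(1-t)^2)"
      using \<open>x * (a*(1-a)^2) = 1\<close> by (simp add: right_diff_distrib mult.assoc)
    also have "a*(1-a)^2 - t*(1-t)^2 = -R" unfolding R_def by algebra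
    finally have "1 - x*t*(1-t)^2 = x * R * (-1)" by simp
    moreover have "2*x*t*(1-t) / (x * R * (-1)) = 2*t*(t-1) / R"
      using \<open>x \<noteq> 0\<close> by (cases "R = 0") (simp_all add: field_simps)
    ultimately show "2*x*t*(1-t) / (1 - x*t*(1-t)^2) = 2*t*(t-1) / ((t-a) * (t^2 + (a-2)*t + (1-a)^2))"
      unfolding R_def by simp
  qed
  also have "\<dots> = (ln ((a-1)/a) + 2*a/w * arctan (w / (a*(2*a-3)))) / (3*a-1)"
    by (rule integral_unique[OF partial_fraction_integral[OF a w]])
  finally show ?thesis unfolding x_def .
qed

lemma arctan_triple:
  fixes y :: real
  assumes "3*y^2 < 1"
  shows "3 * arctan y = arctan ((3*y - y^3) / (1 - 3*y^2))"
proof -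
  have "y^2 < 1" using assms by simp
  then have "\<bar>y\<bar> < 1" using abs_square_less_1 by blast
  define z where "z = 2*y / (1 - y^2)"
  have double: "arctan y + arctan y = arctan z"
    unfolding z_def using arctan_add[of y y] \<open>\<bar>y\<bar> < 1\<close> by (simp add: power2_eq_square)
  have "\<bar>z*y\<bar> = 2*y^2 / (1 - y^2)"
    using \<open>y^2 < 1\<close> unfolding z_def by (simp add: abs_mult power2_eq_square)
  also have "\<dots> < 1" using assms \<open>y^2 < 1\<close> by (simp add: field_simps)
  finally have "arctan z + arctan y = arctan ((z+y) / (1 - z*y))"
    by (rule arctan_add_small)
  moreover have "(z+y) / (1 - z*y) = (3*y - y^3) / (1 - 3*y^2)"
  proof -
    have "1 - y^2 \<noteq> 0" using \<open>y^2 < 1\<close> by simp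
    then have "z + y = (3*y - y^3) / (1 - y^2)" "1 - z*y = (1 - 3*y^2) / (1 - y^2)"
      unfolding z_def by (simp_all add: field_simps power2_eq_square power3_eq_cube)
    then show ?thesis using \<open>1 - y^2 \<noteq> 0\<close> by simp
  qed
  ultimately show ?thesis using double by simp
qed

lemma arctan_triple_sqrt3:
  fixes P :: real
  assumes "P > 3"
  shows "3 * arctan (sqrt 3 / P) = arctan (3 * sqrt 3 * (P^2 - 1) / (P * (P^2 - 9)))"
proof -
  have "3^2 < P^2" using assms by (intro power_strict_mono) auto
  then have "3 * (sqrt 3 / P)^2 < 1" by (simp add: power_divide divide_less_eq)
  then have "3 * arctan (sqrt 3 / P)
      = arctan ((3 * (sqrt 3 / P) - (sqrt 3 / P)^3) / (1 - 3 * (sqrt 3 / P)^2))"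
    by (rule arctan_triple)
  also have "(3 * (sqrt 3 / P) - (sqrt 3 / P)^3) / (1 - 3 * (sqrt 3 / P)^2)
      = 3 * sqrt 3 * (P^2 - 1) / (P * (P^2 - 9))"
    using assms \<open>3^2 < P^2\<close> by (simp add: field_simps power2_eq_square power3_eq_cube)
  finally show ?thesis .
qed

text \<open>The closed form at 3a = -e u^2.  The theorem uses (u, v, e) = (sqrt 5 F_r, L_r, (-1)^r)
  and (u, v, e) = (L_r, sqrt 5 F_r, -(-1)^r).\<close>

lemma sums_inverse_binomial_pair:
  fixes u v e :: real
  assumes e: "e^2 = 1" and u: "u > 0" and v: "v > 0" and uv: "v^2 = u^2 + 4*e"
    and branch: "2*u^2 + 9*e > 0" and conv: "4 < u^2 * (u^2 + 3*e)^2"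
  shows "(\<lambda>k. (-27*e / (u^2 * (u^2 + 3*e)^2))^(k+1) / (real (k+1) * real ((3*(k+1)) choose (k+1))))
           sums (2 * sqrt 3 * u / (v * (u^2 + e)) * (arctan (3 * sqrt 3 * v / (u * (2*u^2 + 9*e))) / 3)
                 - e / (u^2 + e) * ln ((u^2 + 3*e) / u^2))"
proof -
  define a where "a = -e*u^2/3"
  define w where "w = u * v / sqrt 3"
  have e_cases: "e = 1 \<or> e = -1" using e by (simp add: power2_eq_1_iff)
  have a_branch: "a*(2*a-3) = u^2 * (2*u^2 + 9*e) / 9"
    unfolding a_def using e by algebra
  also have "\<dots> > 0" using u branch by (intro divide_pos_pos mult_pos_pos) auto
  finally have a: "a*(2*a-3) > 0" .
  have w: "w > 0" "w^2 = a*(3*a-4)"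
    unfolding w_def a_def using u v e uv by (simp_all add: power_divide power_mult_distrib) algebra
  have "a*(1-a)^2 = -e * u^2 * (u^2 + 3*e)^2 / 27"
    unfolding a_def using e by algebra
  then have x: "1 / (a*(1-a)^2) = -27*e / (u^2 * (u^2 + 3*e)^2)"
    and conv_a: "4 < 27 * \<bar>a*(1-a)^2\<bar>"
    using e conv by (auto simp: abs_mult power2_eq_1_iff)
  have "u^2 + e > 0" using e_cases branch zero_le_power2[of u] by linarith
  have ratio: "(a-1)/a = (u^2 + 3*e) / u^2"
    unfolding a_def using e u by (auto simp: field_simps power2_eq_1_iff)
  have coeff_ln: "1 / (3*a-1) = -e / (u^2 + e)"
    unfolding a_def using e \<open>u^2 + e > 0\<close> by (auto simp: field_simps power2_eq_1_iff)
  have coeff_arctan: "2*a/w*3/(3*a-1) = 2 * sqrt 3 * u / (v * (u^2 + e))"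
  proof -
    have "3*a - 1 = -e * (u^2 + e)" unfolding a_def using e by algebra
    moreover have "2*(-e*u^2/3) / (u * v / sqrt 3) * 3 / (-e * S) = 2 * sqrt 3 * u / (v * S)"
      if "S \<noteq> 0" for S
      using that u v e_cases by (auto simp: field_simps power2_eq_square)
    ultimately show ?thesis
      unfolding w_def using \<open>u^2 + e > 0\<close> by (simp add: a_def)
  qed
  have arctan_arg: "w / (a*(2*a-3)) = 3 * sqrt 3 * v / (u * (2*u^2 + 9*e))"
  proof -
    have "(u * v / sqrt 3) / (u^2 * D / 9) = (9 / sqrt 3) * v / (u * D)" if "D > 0" for D
      using that u by (simp add: field_simps power2_eq_square)
    then have "w / (a*(2*a-3)) = (9 / sqrt 3) * v / (u * (2*u^2 + 9*e))"
      unfolding a_branch w_def using branch by blast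
    moreover have "9 / sqrt 3 = 3 * sqrt (3::real)" by (simp add: field_simps mult.assoc)
    ultimately show ?thesis by simp
  qed
  have split: "(L + k * A) / m = L * (1/m) + (A/3) * (k*3/m)" for L k A m :: real
    by (simp add: add_divide_distrib)
  have "(ln ((a-1)/a) + 2*a/w * arctan (w / (a*(2*a-3)))) / (3*a-1)
      = 2 * sqrt 3 * u / (v * (u^2 + e)) * (arctan (3 * sqrt 3 * v / (u * (2*u^2 + 9*e))) / 3)
        - e / (u^2 + e) * ln ((u^2 + 3*e) / u^2)"
    unfolding split ratio coeff_ln coeff_arctan arctan_arg by (simp add: mult_ac)
  then show ?thesis
    using sums_inverse_binomial_closed_form[OF a w conv_a] unfolding x by simp
qed

lemma sums_inverse_binomial_pair_arctan:
  fixes u v e :: real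
  assumes e: "e^2 = 1" and u: "u > 0" and v: "v > 0" and uv: "v^2 = u^2 + 4*e"
    and branch: "2*u^2 + 9*e > 0" and conv: "4 < u^2 * (u^2 + 3*e)^2"
  shows "(\<lambda>k. (-27*e / (u^2 * (u^2 + 3*e)^2))^(k+1) / (real (k+1) * real ((3*(k+1)) choose (k+1))))
           sums (2 * sqrt 3 * u / (v * (u^2 + e)) * arctan (sqrt 3 / ((u+v)/2 * ((u+v)/2 + v)))
                 - e / (u^2 + e) * ln ((u^2 + 3*e) / u^2))"
proof -
  define P where "P = (u+v)/2 * ((u+v)/2 + v)"
  have P_eq: "P = u^2 + u * v + 3*e"
    unfolding P_def using uv by (simp add: field_simps power2_eq_square)
  have "e = 1 \<or> e = -1" using e by (simp add: power2_eq_1_iff)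
  \<comment> \<open>keeps 3 arctan (sqrt 3 / P) on the principal branch of arctan\<close>
  then have "P > 3"
  proof
    assume "e = 1"
    have "u^2 > 0" "u * v > 0" using u v by simp_all
    then show ?thesis using \<open>e = 1\<close> P_eq by linarith
  next
    assume "e = -1"
    then have "9/2 < u^2" "1/2 < v^2" using branch uv by linarith+
    then have "(3/2)^2 < (u * v)^2"
      using u mult_strict_mono[of "9/2" "u^2" "1/2" "v^2"] by (simp add: power_mult_distrib power_divide)
    then have "3/2 < u * v"
      by (rule power_less_imp_less_base) (use u v in simp)
    then show ?thesis using \<open>e = -1\<close> \<open>9/2 < u^2\<close> P_eq by linarith
  qed
  have "3 * sqrt 3 * (P^2 - 1) / (P * (P^2 - 9)) = 3 * sqrt 3 * v / (u * (2*u^2 + 9*e))"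
  proof -
    have "(P^2 - 1) * (u * (2*u^2 + 9*e)) = v * (P * (P^2 - 9))"
      unfolding P_eq using uv e by algebra
    moreover have "3^2 < P^2" using \<open>P > 3\<close> by (intro power_strict_mono) auto
    then have "P * (P^2 - 9) \<noteq> 0" "u * (2*u^2 + 9*e) \<noteq> 0"
      using \<open>P > 3\<close> u branch by auto
    ultimately show ?thesis by (simp add: frac_eq_eq)
  qed
  then have "arctan (3 * sqrt 3 * v / (u * (2*u^2 + 9*e))) / 3 = arctan (sqrt 3 / P)"
    using arctan_triple_sqrt3[OF \<open>P > 3\<close>] by simp
  with sums_inverse_binomial_pair[OF assms] show ?thesis
    unfolding P_def by simp
qed

lemma lucas_pos: "lucas n > 0"
  by (induction n rule: lucas.induct) auto

lemma lucas_closed_form: "real (lucas n) = golden^n + ((1 - sqrt 5)/2)^n"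
proof (induction n rule: lucas.induct)
  case (3 n)
  define \<phi> \<psi> :: real where "\<phi> = golden" and "\<psi> = (1 - sqrt 5)/2"
  have "\<phi>^2 = \<phi> + 1" "\<psi>^2 = \<psi> + 1"
    unfolding \<phi>_def \<psi>_def golden_def by (simp_all add: field_simps power2_eq_square)
  have "real (lucas (Suc (Suc n))) = \<phi>^n * (\<phi> + 1) + \<psi>^n * (\<psi> + 1)"
    using 3 unfolding \<phi>_def[symmetric] \<psi>_def[symmetric] by (simp add: field_simps)
  also have "\<dots> = \<phi>^Suc (Suc n) + \<psi>^Suc (Suc n)"
    unfolding \<open>\<phi>^2 = \<phi> + 1\<close>[symmetric] \<open>\<psi>^2 = \<psi> + 1\<close>[symmetric] by (simp add: power2_eq_square)
  finally show ?case unfolding \<phi>_def \<psi>_def .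
qed (simp_all add: golden_def field_simps)

lemma golden_power: "golden^n = (real (lucas n) + sqrt 5 * real (fib n)) / 2"
  and golden_conj_power: "((1 - sqrt 5)/2)^n = (real (lucas n) - sqrt 5 * real (fib n)) / 2"
  using lucas_closed_form[of n] fib_closed_form[of n] by (simp_all add: golden_def)

lemma fib_lucas_binet_identities:
  fixes n :: nat
  defines "F \<equiv> real (fib n)" and "L \<equiv> real (lucas n)" and "e \<equiv> (-1::real)^n"
  shows lucas_square: "L^2 = 5 * F^2 + 4 * e"
    and fib_triple: "real (fib (3*n)) = F * (5 * F^2 + 3 * e)"
    and lucas_triple: "real (lucas (3*n)) = L * (L^2 - 3 * e)"
proof -
  define \<beta> \<gamma> :: real where "\<beta> = golden^n" and "\<gamma> = ((1 - sqrt 5)/2)^n"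
  have "\<beta> * \<gamma> = e"
    unfolding \<beta>_def \<gamma>_def e_def golden_def power_mult_distrib[symmetric]
    by (simp add: field_simps)
  moreover have "\<beta> + \<gamma> = L" "\<beta> - \<gamma> = sqrt 5 * F"
    unfolding \<beta>_def \<gamma>_def L_def F_def golden_power golden_conj_power
    by (simp_all add: add_divide_distrib diff_divide_distrib)
  moreover have "real (lucas (3*n)) = \<beta>^3 + \<gamma>^3" "sqrt 5 * real (fib (3*n)) = \<beta>^3 - \<gamma>^3"
    using lucas_closed_form[of "3*n"] fib_closed_form[of "3*n"]
    unfolding \<beta>_def \<gamma>_def golden_def by (simp_all add: power_mult[symmetric] mult.commute)
  ultimately have binet: "\<beta> * \<gamma> = e" "\<beta> + \<gamma> = L" "\<beta> - \<gamma> = sqrt 5 * F"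
    "real (lucas (3*n)) = \<beta>^3 + \<gamma>^3" "sqrt 5 * real (fib (3*n)) = \<beta>^3 - \<gamma>^3"
    by blast+
  have "L^2 = (\<beta> - \<gamma>)^2 + 4 * (\<beta> * \<gamma>)"
    unfolding binet(2)[symmetric] by algebra
  then show "L^2 = 5 * F^2 + 4 * e"
    unfolding binet(1,3) by (simp add: power_mult_distrib)
  have "sqrt 5 * real (fib (3*n)) = (\<beta> - \<gamma>) * ((\<beta> - \<gamma>)^2 + 3 * (\<beta> * \<gamma>))"
    unfolding binet(5) by algebra
  then show "real (fib (3*n)) = F * (5 * F^2 + 3 * e)"
    unfolding binet(1,3) by (simp add: power_mult_distrib)
  show "real (lucas (3*n)) = L * (L^2 - 3 * e)"
    unfolding binet(4) binet(1,2)[symmetric] by algebra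
qed

lemma power_divide_square_regroup:
  fixes s c q d :: "'a::field"
  shows "(s * c / q^2)^n / d = s^n * c^n / (d * q^(2*n))"
  by (simp add: power_mult_distrib power_divide power_mult)

lemma sums_inverse_binomial_fib_form:
  fixes F L e :: real
  assumes e: "e^2 = 1" and F: "F \<ge> 1" and L: "L > 0" and L_sq: "L^2 = 5 * F^2 + 4 * e"
  shows "(\<lambda>k. (-27*e / (5 * F^2 * (5 * F^2 + 3*e)^2))^(k+1) / (real (k+1) * real ((3*(k+1)) choose (k+1))))
           sums (2 * sqrt 15 * F / (L * (5 * F^2 + e))
                   * arctan (sqrt 3 / ((sqrt 5 * F + L)/2 * ((sqrt 5 * F + L)/2 + L)))
                 - e * L / (L * (5 * F^2 + e)) * ln (F * (5 * F^2 + 3*e) / (5 * F^3)))"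
proof -
  have s5: "(sqrt 5 * F)^2 = 5 * F^2" by (simp add: power_mult_distrib)
  have "e = 1 \<or> e = -1" "F^2 \<ge> 1" using e F by (auto simp: power2_eq_1_iff one_le_power)
  then have branch: "2 * (sqrt 5 * F)^2 + 9 * e > 0" and "5 * F^2 + 3 * e \<ge> 2"
    unfolding s5 by auto
  have conv: "4 < (sqrt 5 * F)^2 * ((sqrt 5 * F)^2 + 3 * e)^2"
  proof -
    have "2^2 \<le> (5 * F^2 + 3 * e)^2" using \<open>5 * F^2 + 3 * e \<ge> 2\<close> by (intro power_mono) auto
    then show ?thesis
      unfolding s5 using \<open>F^2 \<ge> 1\<close> mult_mono[of 5 "5 * F^2" 4 "(5 * F^2 + 3 * e)^2"] by simp
  qed
  have u: "sqrt 5 * F > 0" and uv: "L^2 = (sqrt 5 * F)^2 + 4 * e"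
    using F L_sq unfolding s5 by simp_all
  have series: "(\<lambda>k. (-27*e / (5 * F^2 * (5 * F^2 + 3*e)^2))^(k+1) / (real (k+1) * real ((3*(k+1)) choose (k+1))))
      sums (2 * sqrt 3 * (sqrt 5 * F) / (L * (5 * F^2 + e))
              * arctan (sqrt 3 / ((sqrt 5 * F + L)/2 * ((sqrt 5 * F + L)/2 + L)))
            - e / (5 * F^2 + e) * ln ((5 * F^2 + 3*e) / (5 * F^2)))"
    using sums_inverse_binomial_pair_arctan[OF e u L uv branch conv] unfolding s5 .
  have "2 * sqrt 3 * (sqrt 5 * F) = 2 * sqrt 15 * F"
    by (simp add: real_sqrt_mult[symmetric])
  moreover have "e / (5 * F^2 + e) = e * L / (L * (5 * F^2 + e))"
    using L by simp
  moreover have "(5 * F^2 + 3*e) / (5 * F^2) = F * (5 * F^2 + 3*e) / (5 * F^3)"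
    using F by (simp add: power2_eq_square power3_eq_cube)
  ultimately show ?thesis
    using series by (simp only:)
qed

lemma sums_inverse_binomial_lucas_form:
  fixes F L e :: real
  assumes e: "e^2 = 1" and F: "F \<ge> 1" and L: "L \<ge> 1" and L_sq: "L^2 = 5 * F^2 + 4 * e"
  shows "(\<lambda>k. (27 * e / (L^2 * (L^2 - 3 * e)^2))^(k+1) / (real (k+1) * real ((3*(k+1)) choose (k+1))))
           sums (2 * sqrt 15 / 5 * L / (F * (L^2 - e))
                   * arctan (sqrt 3 / ((L + sqrt 5 * F)/2 * ((L + sqrt 5 * F)/2 + sqrt 5 * F)))
                 + e * F / (F * (L^2 - e)) * ln (L * (L^2 - 3 * e) / L^3))"
proof -
  have s5: "(sqrt 5 * F)^2 = 5 * F^2" by (simp add: power_mult_distrib)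
  have "e = 1 \<or> e = -1" "F^2 \<ge> 1" "L^2 \<ge> 1" using e F L by (auto simp: power2_eq_1_iff one_le_power)
  then have "2 * L^2 + 9 * (-e) > 0" "L^2 - 3 * e \<ge> 4"
    unfolding L_sq by auto
  moreover have "4 < L^2 * (L^2 + 3 * (-e))^2"
  proof -
    have "4^2 \<le> (L^2 - 3 * e)^2" using \<open>L^2 - 3 * e \<ge> 4\<close> by (intro power_mono) auto
    then show ?thesis using \<open>L^2 \<ge> 1\<close> mult_mono[of 1 "L^2" "4^2" "(L^2 - 3 * e)^2"] by simp
  qed
  moreover have "(-e)^2 = 1" "L > 0" "sqrt 5 * F > 0" "(sqrt 5 * F)^2 = L^2 + 4 * (-e)"
    using e F L unfolding s5 L_sq by simp_all
  ultimately have "(\<lambda>k. (27 * e / (L^2 * (L^2 - 3 * e)^2))^(k+1) / (real (k+1) * real ((3*(k+1)) choose (k+1))))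
      sums (2 * sqrt 3 * L / (sqrt 5 * F * (L^2 - e))
              * arctan (sqrt 3 / ((L + sqrt 5 * F)/2 * ((L + sqrt 5 * F)/2 + sqrt 5 * F)))
            + e / (L^2 - e) * ln ((L^2 - 3 * e) / L^2))"
    using sums_inverse_binomial_pair_arctan[of "-e" L "sqrt 5 * F"] by simp
  moreover have "2 * sqrt 3 * L / (sqrt 5 * F * (L^2 - e)) = 2 * sqrt 15 / 5 * L / (F * (L^2 - e))"
  proof -
    have "sqrt 15 = sqrt 3 * sqrt (5::real)" by (simp add: real_sqrt_mult[symmetric])
    moreover have "sqrt 5 * sqrt 5 = (5::real)" by simp
    ultimately have "2 * sqrt 15 / 5 = 2 * sqrt 3 / sqrt (5::real)"
      by (metis nonzero_mult_divide_mult_cancel_right real_sqrt_eq_zero_cancel_iff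
          zero_neq_numeral times_divide_eq_right)
    then show ?thesis by simp
  qed
  moreover have "e / (L^2 - e) = e * F / (F * (L^2 - e))"
    using F by simp
  moreover have "(L^2 - 3 * e) / L^2 = L * (L^2 - 3 * e) / L^3"
    using L by (simp add: power2_eq_square power3_eq_cube)
  ultimately show ?thesis by (simp only:)
qed

lemma sums_inverse_binomial_fib:
  fixes r :: nat
  assumes "r \<ge> 1"
  shows "(\<lambda>k. ((-1) ^ ((r - 1) * (k + 1)) * (27 / 5) ^ (k + 1)) /
             (real (k + 1) * real ((3 * (k + 1)) choose (k + 1)) * real (fib (3 * r)) ^ (2 * (k + 1))))
           sums (2 * sqrt 15 * real (fib r) / real (lucas (3 * r))
                   * arctan (sqrt 3 / (golden ^ r * (golden ^ r + real (lucas r))))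
                 - (-1) ^ r * real (lucas r) / real (lucas (3 * r))
                   * ln (real (fib (3 * r)) / (5 * real (fib r) ^ 3)))"
proof -
  define F L e where "F = real (fib r)" and "L = real (lucas r)" and "e = (-1::real)^r"
  have "F \<ge> 1" "L > 0" using assms fib_neq_0_nat[of r] lucas_pos[of r]
    unfolding F_def L_def by auto
  have "e^2 = 1" unfolding e_def by (simp flip: power_mult add: mult.commute)
  have L_sq: "L^2 = 5 * F^2 + 4 * e"
    unfolding F_def L_def e_def by (rule lucas_square)
  have golden: "(sqrt 5 * F + L) / 2 = golden^r"
    unfolding golden_power F_def L_def by simp
  have L3: "L * (5 * F^2 + e) = real (lucas (3*r))"
    using lucas_triple[of r, folded F_def L_def e_def] L_sq by simp
  have F3: "F * (5 * F^2 + 3 * e) = real (fib (3*r))"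
    unfolding F_def e_def by (rule fib_triple[symmetric])
  have "(-1::real)^(r-1) = -e"
    using assms unfolding e_def by (cases r) auto
  then have x: "-27*e / (5 * F^2 * (5 * F^2 + 3*e)^2) = (-1)^(r-1) * (27/5) / (F * (5 * F^2 + 3 * e))^2"
    by (simp add: power_mult_distrib)
  show ?thesis
    using sums_inverse_binomial_fib_form[OF \<open>e^2 = 1\<close> \<open>F \<ge> 1\<close> \<open>L > 0\<close> L_sq]
    unfolding x golden L3 F3
    unfolding power_divide_square_regroup power_mult[symmetric]
    unfolding F_def L_def e_def .
qed

lemma sums_inverse_binomial_lucas:
  fixes r :: nat
  assumes "r \<ge> 1"
  shows "(\<lambda>k. ((-1) ^ (r * (k + 1)) * 27 ^ (k + 1)) /
             (real (k + 1) * real ((3 * (k + 1)) choose (k + 1)) * real (lucas (3 * r)) ^ (2 * (k + 1))))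
           sums (2 * sqrt 15 / 5 * real (lucas r) / real (fib (3 * r))
                   * arctan (sqrt 3 / (golden ^ r * (golden ^ r + sqrt 5 * real (fib r))))
                 + (-1) ^ r * real (fib r) / real (fib (3 * r))
                   * ln (real (lucas (3 * r)) / real (lucas r) ^ 3))"
proof -
  define F L e where "F = real (fib r)" and "L = real (lucas r)" and "e = (-1::real)^r"
  have "F \<ge> 1" "L \<ge> 1" using assms fib_neq_0_nat[of r] lucas_pos[of r]
    unfolding F_def L_def by auto
  have "e^2 = 1" unfolding e_def by (simp flip: power_mult add: mult.commute)
  have L_sq: "L^2 = 5 * F^2 + 4 * e"
    unfolding F_def L_def e_def by (rule lucas_square)
  have golden: "(L + sqrt 5 * F) / 2 = golden^r"
    unfolding golden_power F_def L_def by simp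
  have F3: "F * (L^2 - e) = real (fib (3*r))"
    using fib_triple[of r, folded F_def e_def] L_sq by simp
  have L3: "L * (L^2 - 3 * e) = real (lucas (3*r))"
    unfolding F_def L_def e_def by (rule lucas_triple[symmetric])
  have x: "27 * e / (L^2 * (L^2 - 3 * e)^2) = (-1)^r * 27 / (L * (L^2 - 3 * e))^2"
    unfolding e_def by (simp add: power_mult_distrib)
  show ?thesis
    using sums_inverse_binomial_lucas_form[OF \<open>e^2 = 1\<close> \<open>F \<ge> 1\<close> \<open>L \<ge> 1\<close> L_sq]
    unfolding x golden F3 L3
    unfolding power_divide_square_regroup power_mult[symmetric]
    unfolding F_def L_def e_def .
qed

theorem corollary5:
  fixes r :: nat
  assumes "r \<ge> 1"
  shows "(\<lambda>k. ((-1) ^ ((r - 1) * (k + 1)) * (27 / 5) ^ (k + 1)) /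
             (real (k + 1) * real ((3 * (k + 1)) choose (k + 1)) * real (fib (3 * r)) ^ (2 * (k + 1))))
           sums (2 * sqrt 15 * real (fib r) / real (lucas (3 * r))
                   * arctan (sqrt 3 / (golden ^ r * (golden ^ r + real (lucas r))))
                 - (-1) ^ r * real (lucas r) / real (lucas (3 * r))
                   * ln (real (fib (3 * r)) / (5 * real (fib r) ^ 3)))
         \<and> (\<lambda>k. ((-1) ^ (r * (k + 1)) * 27 ^ (k + 1)) /
             (real (k + 1) * real ((3 * (k + 1)) choose (k + 1)) * real (lucas (3 * r)) ^ (2 * (k + 1))))
           sums (2 * sqrt 15 / 5 * real (lucas r) / real (fib (3 * r))
                   * arctan (sqrt 3 / (golden ^ r * (golden ^ r + sqrt 5 * real (fib r))))
                 + (-1) ^ r * real (fib r) / real (fib (3 * r))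
                   * ln (real (lucas (3 * r)) / real (lucas r) ^ 3))"
  using sums_inverse_binomial_fib[OF assms] sums_inverse_binomial_lucas[OF assms] ..

end
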